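(* Let $T\in\mathbb{N}$, let $\mathbf{x}$ be a configuration and let $A(\mathbf{x},\cdot):[T]\to[0,1]$ satisfy the concavity assumption. For any $t\in[T]$, let $H^{(\mathbf{x})}=(A(\mathbf{x},1),\dots,A(\mathbf{x},t))$. Then $\textsc{Pred}(H^{(\mathbf{x})})\ge A(\mathbf{x},T)$.
   Context: $[T]=\{1,\dots,T\}$. Concavity assumption: for all $b\in\{2,\dots,T-1\}$, $A(\mathbf{x},b+1)-A(\mathbf{x},b)\le A(\mathbf{x},b)-A(\mathbf{x},b-1)$. For a finite sequence $H=(H_1,\dots,H_m)$, $\textsc{Pred}(H)$ is defined as follows: if $m=1$ return $+\infty$; otherwise, with $t_2=m$, $t_1=m-1$, $a_1=H_{t_1}$, $a_2=H_{t_2}$, return $a_2+(a_2-a_1)(T-t_2)$. *)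

theory Defs
  imports "HOL-Analysis.Analysis" "HOL-Library.Extended_Real"
begin

text \<open>Pred on a finite sequence H = (H_1,...,H_m), stored as a list (H_i = H ! (i-1)).
  If m = 1 return +infinity; otherwise with t2 = m, t1 = m-1,
  return a2 + (a2 - a1) * (T - t2).\<close>
definition Pred :: "nat \<Rightarrow> real list \<Rightarrow> ereal" where
  "Pred T H = (if length H = 1 then \<infinity>
     else (let m = length H; a1 = H ! (m - 2); a2 = H ! (m - 1)
           in ereal (a2 + (a2 - a1) * (real T - real m))))"

definition concave_on_T :: "nat \<Rightarrow> (nat \<Rightarrow> real) \<Rightarrow> bool" where
  "concave_on_T T f \<longleftrightarrow> (\<forall>b\<in>{2..T-1}. f (b+1) - f b \<le> f b - f (b-1))"

end

theory Submission
  imports Defs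
begin

text \<open>Concavity makes the increments f (b+1) - f b non-increasing, so from time t on the
  sequence grows at most at the rate of its last observed increment f t - f (t-1).
  Hence the straight-line extrapolation Pred through the last two observations
  dominates every later value, in particular the value at T.\<close>

lemma concave_on_T_diff_antimono:
  assumes conc: "concave_on_T T f" and "1 \<le> i" "i \<le> j" "j + 1 \<le> T"
  shows "f (j + 1) - f j \<le> f (i + 1) - f i"
  using assms(3,4)
proof (induction j rule: dec_induct)
  case base
  then show ?case by simp
next
  case (step j)
  have "Suc j \<in> {2..T-1}" using step.prems \<open>1 \<le> i\<close> step.hyps by auto
  then have "f (Suc j + 1) - f (Suc j) \<le> f (Suc j) - f j"
    using conc unfolding concave_on_T_def by fastforce
  also have "\<dots> \<le> f (i + 1) - f i" using step by simp
  finally show ?case .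
qed

lemma concave_on_T_le_extrapolation:
  assumes conc: "concave_on_T T f" and "2 \<le> t" "t \<le> s" "s \<le> T"
  shows "f s \<le> f t + (f t - f (t - 1)) * (real s - real t)"
  using assms(3,4)
proof (induction s rule: dec_induct)
  case base
  then show ?case by simp
next
  case (step s)
  have "f (s + 1) - f s \<le> f (t - 1 + 1) - f (t - 1)"
    using concave_on_T_diff_antimono[OF conc, of "t - 1" s] step assms(2) by simp
  then have "f (Suc s) - f s \<le> f t - f (t - 1)" using assms(2) by simp
  with step show ?case by (simp add: algebra_simps)
qed

lemma Pred_map_upt:
  assumes "2 \<le> t"
  shows "Pred T (map f [1..<t+1]) = ereal (f t + (f t - f (t - 1)) * (real T - real t))"
proof -
  have "map f [1..<t+1] ! (t - 2) = f (t - 1)" "map f [1..<t+1] ! (t - 1) = f t"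
    using assms by (simp_all del: upt_Suc add: nth_upt Suc_diff_Suc numeral_2_eq_2)
  then show ?thesis using assms unfolding Pred_def Let_def by simp
qed

theorem lemma5:
  fixes T :: nat and A :: "'x \<Rightarrow> nat \<Rightarrow> real" and x :: 'x and t :: nat
  assumes range: "\<forall>b\<in>{1..T}. A x b \<in> {0..1}"
    and conc: "concave_on_T T (A x)"
    and t: "t \<in> {1..T}"
  shows "Pred T (map (A x) [1..<t+1]) \<ge> ereal (A x T)"
proof (cases "t = 1")
  case True
  then show ?thesis by (simp add: Pred_def)
next
  case False
  with t have "2 \<le> t" "t \<le> T" by auto
  then show ?thesis
    using concave_on_T_le_extrapolation[OF conc, of t T] by (simp only: Pred_map_upt) simp
qed

end
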